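(* Let $K=\{p\in\mathbb{R}^3:0\le p_3\le\theta(p_1,p_2)\}$, let $p\in\mathbb{R}^3$ and suppose its Euclidean projection onto $K$ is of the form $p^{pr}=(p^{pr}_1,p^{pr}_2,\theta(p^{pr}_1,p^{pr}_2))$ with $(p^{pr}_1,p^{pr}_2)\in(0,\infty)^2$. For $q>0$ let $w(q)=(q^{1/2},q^{-1/2},\theta(q^{1/2},q^{-1/2}))$ and $n(q)=(-\partial_1\theta(q^{1/2},q^{-1/2}),-\partial_2\theta(q^{1/2},q^{-1/2}),1)$. Then there is a unique $(q,\tau)\in(0,\infty)^2$ with $p^{pr}=\tau\,w(q)$; this $q$ is the unique root of $q\mapsto\langle p,w(q)\times n(q)\rangle$ and $\tau=\langle p,w(q)/\|w(q)\|^2\rangle$.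
   Context: $\theta:[0,\infty)^2\to[0,\infty)$ is continuous, concave, 1-homogeneous, symmetric, $C^\infty$ on $(0,\infty)^2$, with $\theta(0,s)=\theta(s,0)=0$, $\theta(s,s)=s$, $\theta(s,t)>0$ for $s,t>0$, and nondecreasing in each argument; $\theta(s,t)=-\infty$ if $\min\{s,t\}<0$. $\times$ denotes the cross product in $\mathbb{R}^3$ and $\langle\cdot,\cdot\rangle$, $\|\cdot\|$ the Euclidean inner product and norm. *)

theory Defs
  imports "HOL-Analysis.Analysis"
begin

definition pd1 :: "(real \<Rightarrow> real \<Rightarrow> real) \<Rightarrow> real \<Rightarrow> real \<Rightarrow> real" where
  "pd1 f x y = deriv (\<lambda>s. f s y) x"

definition pd2 :: "(real \<Rightarrow> real \<Rightarrow> real) \<Rightarrow> real \<Rightarrow> real \<Rightarrow> real" where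
  "pd2 f x y = deriv (\<lambda>t. f x t) y"

(* iterated partial derivative: True = d/dx, False = d/dy, applied right-to-left *)
fun ipd :: "bool list \<Rightarrow> (real \<Rightarrow> real \<Rightarrow> real) \<Rightarrow> real \<Rightarrow> real \<Rightarrow> real" where
  "ipd [] f = f"
| "ipd (d # ds) f = (if d then pd1 (ipd ds f) else pd2 (ipd ds f))"

definition C_inf_on :: "(real \<times> real) set \<Rightarrow> (real \<Rightarrow> real \<Rightarrow> real) \<Rightarrow> bool" where
  "C_inf_on S f \<longleftrightarrow>
     (\<forall>ds. continuous_on S (\<lambda>(x, y). ipd ds f x y) \<and>
           (\<forall>(x, y)\<in>S. (\<lambda>s. ipd ds f s y) differentiable (at x) \<and>
                        (\<lambda>t. ipd ds f x t) differentiable (at y)))"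

definition admissible_theta :: "(real \<Rightarrow> real \<Rightarrow> real) \<Rightarrow> bool" where
  "admissible_theta \<theta> \<longleftrightarrow>
     continuous_on ({0..} \<times> {0..}) (\<lambda>(s, t). \<theta> s t) \<and>
     concave_on ({0..} \<times> {0..}) (\<lambda>(s, t). \<theta> s t) \<and>
     (\<forall>l s t. l \<ge> 0 \<and> s \<ge> 0 \<and> t \<ge> 0 \<longrightarrow> \<theta> (l * s) (l * t) = l * \<theta> s t) \<and>
     (\<forall>s t. s \<ge> 0 \<and> t \<ge> 0 \<longrightarrow> \<theta> s t = \<theta> t s) \<and>
     C_inf_on ({0<..} \<times> {0<..}) \<theta> \<and>
     (\<forall>s. s \<ge> 0 \<longrightarrow> \<theta> 0 s = 0 \<and> \<theta> s 0 = 0) \<and>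
     (\<forall>s. s \<ge> 0 \<longrightarrow> \<theta> s s = s) \<and>
     (\<forall>s t. s > 0 \<and> t > 0 \<longrightarrow> \<theta> s t > 0) \<and>
     (\<forall>s s' t. 0 \<le> s \<and> s \<le> s' \<and> 0 \<le> t \<longrightarrow> \<theta> s t \<le> \<theta> s' t) \<and>
     (\<forall>s t t'. 0 \<le> s \<and> 0 \<le> t \<and> t \<le> t' \<longrightarrow> \<theta> s t \<le> \<theta> s t')"

(* K = {p : 0 \<le> p3 \<le> \<theta>(p1,p2)}, with \<theta> = -\<infinity> outside the quadrant *)
definition Kset :: "(real \<Rightarrow> real \<Rightarrow> real) \<Rightarrow> (real^3) set" where
  "Kset \<theta> = {p. p$1 \<ge> 0 \<and> p$2 \<ge> 0 \<and> 0 \<le> p$3 \<and> p$3 \<le> \<theta> (p$1) (p$2)}"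

definition wvec :: "(real \<Rightarrow> real \<Rightarrow> real) \<Rightarrow> real \<Rightarrow> real^3" where
  "wvec \<theta> q = vector [sqrt q, 1 / sqrt q, \<theta> (sqrt q) (1 / sqrt q)]"

definition nvec :: "(real \<Rightarrow> real \<Rightarrow> real) \<Rightarrow> real \<Rightarrow> real^3" where
  "nvec \<theta> q = vector [- pd1 \<theta> (sqrt q) (1 / sqrt q), - pd2 \<theta> (sqrt q) (1 / sqrt q), 1]"

end

theory Submission
  imports Defs
begin

text \<open>
  The nearest point \<open>pp\<close> lies on the graph of \<open>\<theta>\<close>, so the first-order conditions of the
  projection give \<open>p = pp + l n\<close> with \<open>l \<ge> 0\<close> and \<open>n\<close> the upward normal at \<open>pp\<close>.
  By 1-homogeneity, \<open>pp\<close> is a positive multiple of \<open>w(q)\<close> for \<open>q = pp\<^sub>1 / pp\<^sub>2\<close> and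
  \<open>n(q)\<close> is the normal at \<open>pp\<close>; since \<open>n(q) \<perp> w(q)\<close>, this \<open>q\<close> is a root and \<open>\<tau>\<close> is the
  coefficient of \<open>p\<close> along \<open>w(q)\<close>. Along the ray through \<open>(r, 1)\<close> the gradient of \<open>\<theta>\<close> is
  described by the tangent line at \<open>r\<close> of the concave profile \<open>s \<mapsto> \<theta>(s, 1)\<close>. Comparing
  the tangent lines at \<open>r \<noteq> q\<close> (each lies above the profile, the profile is nondecreasing
  and \<open>\<theta>(s, 1)/s\<close> is nonincreasing) shows that both summands of
  \<open>\<langle>p, w(r) \<times> n(r)\<rangle>\<close>, coming from \<open>\<tau> w(q)\<close> and \<open>l n(q)\<close>, have the sign of \<open>q - r\<close>.
\<close>

lemma admissible_theta_continuous:
  "admissible_theta \<theta> \<Longrightarrow> continuous_on ({0..} \<times> {0..}) (\<lambda>(s, t). \<theta> s t)"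
  by (simp add: admissible_theta_def)

lemma admissible_theta_concave:
  "admissible_theta \<theta> \<Longrightarrow> concave_on ({0..} \<times> {0..}) (\<lambda>(s, t). \<theta> s t)"
  by (simp add: admissible_theta_def)

lemma admissible_theta_homogeneous:
  "admissible_theta \<theta> \<Longrightarrow> 0 \<le> l \<Longrightarrow> 0 \<le> s \<Longrightarrow> 0 \<le> t \<Longrightarrow> \<theta> (l * s) (l * t) = l * \<theta> s t"
  by (simp add: admissible_theta_def)

lemma admissible_theta_C_inf: "admissible_theta \<theta> \<Longrightarrow> C_inf_on ({0<..} \<times> {0<..}) \<theta>"
  by (simp add: admissible_theta_def)

lemma admissible_theta_zero: "admissible_theta \<theta> \<Longrightarrow> 0 \<le> s \<Longrightarrow> \<theta> 0 s = 0 \<and> \<theta> s 0 = 0"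
  by (simp add: admissible_theta_def)

lemma admissible_theta_pos: "admissible_theta \<theta> \<Longrightarrow> 0 < s \<Longrightarrow> 0 < t \<Longrightarrow> 0 < \<theta> s t"
  by (simp add: admissible_theta_def)

lemma admissible_theta_mono1:
  "admissible_theta \<theta> \<Longrightarrow> 0 \<le> s \<Longrightarrow> s \<le> s' \<Longrightarrow> 0 \<le> t \<Longrightarrow> \<theta> s t \<le> \<theta> s' t"
  by (simp add: admissible_theta_def)

lemma admissible_theta_mono2:
  "admissible_theta \<theta> \<Longrightarrow> 0 \<le> s \<Longrightarrow> 0 \<le> t \<Longrightarrow> t \<le> t' \<Longrightarrow> \<theta> s t \<le> \<theta> s t'"
  by (simp add: admissible_theta_def)

lemma admissible_theta_nonneg: "admissible_theta \<theta> \<Longrightarrow> 0 \<le> s \<Longrightarrow> 0 \<le> t \<Longrightarrow> 0 \<le> \<theta> s t"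
  using admissible_theta_mono1[of \<theta> 0 s t] admissible_theta_zero[of \<theta> t] by simp

lemma admissible_theta_eq_scaled:
  "admissible_theta \<theta> \<Longrightarrow> 0 < x \<Longrightarrow> 0 < y \<Longrightarrow> \<theta> x y = y * \<theta> (x / y) 1"
  using admissible_theta_homogeneous[of \<theta> y "x / y" 1] by simp

lemma C_inf_on_has_pd1:
  assumes "C_inf_on S f" and "(x, y) \<in> S"
  shows "((\<lambda>s. f s y) has_real_derivative pd1 f x y) (at x)"
proof -
  have "(\<lambda>s. ipd [] f s y) differentiable (at x)"
    using assms unfolding C_inf_on_def by fast
  then show ?thesis
    unfolding pd1_def by (simp add: DERIV_deriv_iff_real_differentiable)
qed

lemma C_inf_on_has_pd2:
  assumes "C_inf_on S f" and "(x, y) \<in> S"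
  shows "((\<lambda>t. f x t) has_real_derivative pd2 f x y) (at y)"
proof -
  have "(\<lambda>t. ipd [] f x t) differentiable (at y)"
    using assms unfolding C_inf_on_def by fast
  then show ?thesis
    unfolding pd2_def by (simp add: DERIV_deriv_iff_real_differentiable)
qed

lemma admissible_theta_has_pd1:
  "admissible_theta \<theta> \<Longrightarrow> 0 < x \<Longrightarrow> 0 < y \<Longrightarrow> ((\<lambda>s. \<theta> s y) has_real_derivative pd1 \<theta> x y) (at x)"
  by (rule C_inf_on_has_pd1[OF admissible_theta_C_inf]) auto

lemma admissible_theta_has_pd2:
  "admissible_theta \<theta> \<Longrightarrow> 0 < x \<Longrightarrow> 0 < y \<Longrightarrow> ((\<lambda>t. \<theta> x t) has_real_derivative pd2 \<theta> x y) (at y)"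
  by (rule C_inf_on_has_pd2[OF admissible_theta_C_inf]) auto

definition tangent_slope :: "(real \<Rightarrow> real \<Rightarrow> real) \<Rightarrow> real \<Rightarrow> real" where
  "tangent_slope \<theta> r = pd1 \<theta> r 1"

definition tangent_intercept :: "(real \<Rightarrow> real \<Rightarrow> real) \<Rightarrow> real \<Rightarrow> real" where
  "tangent_intercept \<theta> r = \<theta> r 1 - r * tangent_slope \<theta> r"

lemma pd1_eq_tangent_slope:
  assumes a: "admissible_theta \<theta>" and x: "0 < x" and y: "0 < y"
  shows "pd1 \<theta> x y = tangent_slope \<theta> (x / y)"
proof -
  have "((\<lambda>s. \<theta> (s / y) 1) has_real_derivative pd1 \<theta> (x / y) 1 * (1 / y)) (at x)"
    by (rule DERIV_chain2[OF admissible_theta_has_pd1[OF a]])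
       (use x y in \<open>auto intro!: derivative_eq_intros\<close>)
  then have "((\<lambda>s. y * \<theta> (s / y) 1) has_real_derivative y * (pd1 \<theta> (x / y) 1 * (1 / y))) (at x)"
    by (rule DERIV_cmult)
  then have "((\<lambda>s. y * \<theta> (s / y) 1) has_real_derivative pd1 \<theta> (x / y) 1) (at x)"
    using y by simp
  then have "((\<lambda>s. \<theta> s y) has_real_derivative pd1 \<theta> (x / y) 1) (at x)"
    by (rule has_field_derivative_transform_within_open[where S="{0<..}"])
       (use x y admissible_theta_eq_scaled[OF a _ y] in auto)
  then show ?thesis
    unfolding tangent_slope_def using DERIV_unique admissible_theta_has_pd1[OF a x y] by blast
qed

text \<open>Euler's relation, obtained by differentiating \<open>\<theta> x t = t \<theta>(x/t, 1)\<close> in \<open>t\<close>.\<close>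
lemma pd2_eq_tangent_intercept:
  assumes a: "admissible_theta \<theta>" and x: "0 < x" and y: "0 < y"
  shows "pd2 \<theta> x y = tangent_intercept \<theta> (x / y)"
proof -
  have "((\<lambda>t. \<theta> (x / t) 1) has_real_derivative pd1 \<theta> (x / y) 1 * (- (x / y\<^sup>2))) (at y)"
    by (rule DERIV_chain2[OF admissible_theta_has_pd1[OF a]])
       (use x y in \<open>auto intro!: derivative_eq_intros simp: power2_eq_square\<close>)
  then have "((\<lambda>t. t * \<theta> (x / t) 1) has_real_derivative
      1 * \<theta> (x / y) 1 + pd1 \<theta> (x / y) 1 * (- (x / y\<^sup>2)) * y) (at y)"
    by (rule DERIV_mult[OF DERIV_ident])
  then have "((\<lambda>t. t * \<theta> (x / t) 1) has_real_derivative tangent_intercept \<theta> (x / y)) (at y)"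
    using y by (simp add: tangent_intercept_def tangent_slope_def power2_eq_square field_simps)
  then have "((\<lambda>t. \<theta> x t) has_real_derivative tangent_intercept \<theta> (x / y)) (at y)"
    by (rule has_field_derivative_transform_within_open[where S="{0<..}"])
       (use x y admissible_theta_eq_scaled[OF a x] in auto)
  then show ?thesis
    using DERIV_unique admissible_theta_has_pd2[OF a x y] by blast
qed

lemma wvec_eq:
  assumes a: "admissible_theta \<theta>" and r: "0 < r"
  shows "wvec \<theta> r = (1 / sqrt r) *\<^sub>R vector [r, 1, \<theta> r 1]"
proof -
  have "\<theta> (sqrt r) (1 / sqrt r) = \<theta> ((1 / sqrt r) * r) ((1 / sqrt r) * 1)"
    using r by (simp add: real_div_sqrt)
  also have "\<dots> = (1 / sqrt r) * \<theta> r 1"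
    using admissible_theta_homogeneous[OF a, of "1 / sqrt r" r 1] r by simp
  finally show ?thesis
    unfolding wvec_def using r by (simp add: vec_eq_iff forall_3 real_div_sqrt)
qed

lemma nvec_eq:
  assumes a: "admissible_theta \<theta>" and r: "0 < r"
  shows "nvec \<theta> r = vector [- tangent_slope \<theta> r, - tangent_intercept \<theta> r, 1]"
proof -
  have "sqrt r / (1 / sqrt r) = r" using r by simp
  then show ?thesis
    unfolding nvec_def using r pd1_eq_tangent_slope[OF a, of "sqrt r" "1 / sqrt r"]
      pd2_eq_tangent_intercept[OF a, of "sqrt r" "1 / sqrt r"]
    by (simp add: vec_eq_iff forall_3)
qed

lemma nvec_eq_normal:
  assumes a: "admissible_theta \<theta>" and x: "0 < x" and y: "0 < y"
  shows "nvec \<theta> (x / y) = vector [- pd1 \<theta> x y, - pd2 \<theta> x y, 1]"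
  using nvec_eq[OF a] pd1_eq_tangent_slope[OF a x y] pd2_eq_tangent_intercept[OF a x y] x y
  by simp

lemma wvec_nonzero:
  assumes "0 < r"
  shows "wvec \<theta> r \<noteq> 0"
proof
  assume "wvec \<theta> r = 0"
  then have "wvec \<theta> r $ 2 = 0" by simp
  with assms show False unfolding wvec_def by simp
qed

lemma nvec_inner_wvec:
  assumes "admissible_theta \<theta>" and "0 < r"
  shows "nvec \<theta> r \<bullet> wvec \<theta> r = 0"
  unfolding nvec_eq[OF assms] wvec_eq[OF assms]
  by (simp add: inner_vec_def sum_3 tangent_intercept_def algebra_simps
      add_divide_distrib[symmetric])

lemma concave_on_section:
  assumes "concave_on (A \<times> B) (\<lambda>(s, t). f s t)" and "y \<in> B"
  shows "concave_on A (\<lambda>s. f s y)"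
proof -
  have "fst ` (A \<times> B) = A" using assms(2) by force
  then have "convex A"
    using convex_linear_image[OF linear_fst concave_on_imp_convex[OF assms(1)]] by simp
  show ?thesis
    unfolding concave_on_iff
  proof (intro conjI \<open>convex A\<close> ballI allI impI)
    fix x x' and u v :: real
    assume "x \<in> A" "x' \<in> A" "0 \<le> u" "0 \<le> v" "u + v = 1"
    then have "u * f x y + v * f x' y \<le> f (u *\<^sub>R x + v *\<^sub>R x') (u *\<^sub>R y + v *\<^sub>R y)"
      using assms unfolding concave_on_iff by fastforce
    then show "u * f x y + v * f x' y \<le> f (u *\<^sub>R x + v *\<^sub>R x') y"
      using \<open>u + v = 1\<close> by (metis scaleR_add_left scaleR_one)
  qed
qed

lemma concave_on_below_tangent:
  fixes f :: "real \<Rightarrow> real"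
  assumes "concave_on A f" "connected A" "c \<in> interior A" "x \<in> A"
    and "(f has_real_derivative D) (at c within A)"
  shows "f x \<le> f c + D * (x - c)"
proof -
  have "- D * (x - c) \<le> - f x - - f c"
    by (rule convex_on_imp_above_tangent[OF _ assms(2-4) DERIV_minus[OF assms(5)]])
       (use assms(1) in \<open>simp add: concave_on_def\<close>)
  then show ?thesis by simp
qed

lemma theta_below_tangent:
  assumes a: "admissible_theta \<theta>" and r: "0 < r" and s: "0 \<le> s"
  shows "\<theta> s 1 \<le> tangent_slope \<theta> r * s + tangent_intercept \<theta> r"
proof -
  have "concave_on {0..} (\<lambda>s. \<theta> s 1)"
    by (rule concave_on_section[OF admissible_theta_concave[OF a]]) simp
  moreover have "((\<lambda>s. \<theta> s 1) has_real_derivative tangent_slope \<theta> r) (at r within {0..})"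
    unfolding tangent_slope_def
    by (rule has_field_derivative_at_within[OF admissible_theta_has_pd1[OF a r]]) simp
  ultimately have "\<theta> s 1 \<le> \<theta> r 1 + tangent_slope \<theta> r * (s - r)"
    using r s by (intro concave_on_below_tangent) (auto simp: convex_connected)
  then show ?thesis
    by (simp add: tangent_intercept_def algebra_simps)
qed

lemma tangent_slope_nonneg: "admissible_theta \<theta> \<Longrightarrow> 0 < r \<Longrightarrow> 0 \<le> tangent_slope \<theta> r"
  using theta_below_tangent[of \<theta> r "r + 1"] admissible_theta_mono1[of \<theta> r "r + 1" 1]
  by (simp add: tangent_intercept_def algebra_simps)

lemma tangent_intercept_nonneg: "admissible_theta \<theta> \<Longrightarrow> 0 < r \<Longrightarrow> 0 \<le> tangent_intercept \<theta> r"
  using theta_below_tangent[of \<theta> r 0] admissible_theta_zero[of \<theta> 1] by simp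

lemma theta_ratio_antimono:
  assumes a: "admissible_theta \<theta>" and "0 < \<sigma>" "\<sigma> < \<rho>"
  shows "\<sigma> * \<theta> \<rho> 1 \<le> \<rho> * \<theta> \<sigma> 1"
proof -
  have "(\<sigma> / \<rho>) * \<theta> \<rho> 1 = \<theta> ((\<sigma> / \<rho>) * \<rho>) ((\<sigma> / \<rho>) * 1)"
    using admissible_theta_homogeneous[OF a, of "\<sigma> / \<rho>" \<rho> 1] assms(2,3) by simp
  also have "\<dots> \<le> \<theta> \<sigma> 1"
    using admissible_theta_mono2[OF a, of \<sigma> "\<sigma> / \<rho>" 1] assms(2,3) by simp
  finally show ?thesis
    using assms(2,3) by (simp add: field_simps)
qed

text \<open>With \<open>m = (\<rho>, 1, \<rho> a + b) \<times> (-a, -b, 1)\<close>, the two expressions below are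
  \<open>\<langle>(\<sigma>, 1, \<sigma> a' + b'), m\<rangle>\<close> and \<open>\<langle>(-a', -b', 1), m\<rangle>\<close>, where \<open>a, b\<close> and \<open>a', b'\<close> are the
  tangent-line data at \<open>\<rho>\<close> and \<open>\<sigma>\<close>.\<close>
lemma tangent_cross_sign_less:
  fixes \<rho> \<sigma> a b a' b' :: real
  assumes "0 < \<rho>" "\<rho> < \<sigma>" "0 \<le> a" "0 \<le> b"
    and above_\<sigma>: "\<sigma>*a' + b' \<le> \<sigma>*a + b" and above_\<rho>: "\<rho>*a + b \<le> \<rho>*a' + b'"
    and mono: "\<rho>*a + b \<le> \<sigma>*a' + b'"
  shows "0 < \<sigma>*(1 + b*(\<rho>*a + b)) - (\<rho> + a*(\<rho>*a + b)) + (\<sigma>*a' + b')*(a - \<rho>*b)"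
    and "0 \<le> b'*(\<rho> + a*(\<rho>*a + b)) - a'*(1 + b*(\<rho>*a + b)) + (a - \<rho>*b)"
proof -
  define d where "d = \<sigma>*a + b - (\<sigma>*a' + b')"
  have d: "0 \<le> d" "d \<le> a*(\<sigma> - \<rho>)" using above_\<sigma> mono by (simp_all add: d_def algebra_simps)
  have "d*(a - \<rho>*b) \<le> d*a"
    using d assms(1,4) by (simp add: mult_left_mono)
  also have "\<dots> \<le> a*(\<sigma> - \<rho>)*a"
    using d assms(3) by (simp add: mult_right_mono)
  also have "\<dots> < (1 + a\<^sup>2 + b\<^sup>2)*(\<sigma> - \<rho>)"
  proof -
    have "0 < (1 + b\<^sup>2)*(\<sigma> - \<rho>)" using assms(2) by (simp add: add_pos_nonneg)
    then show ?thesis by (simp add: power2_eq_square algebra_simps)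
  qed
  also have "(1 + a\<^sup>2 + b\<^sup>2)*(\<sigma> - \<rho>)
      = \<sigma>*(1 + b*(\<rho>*a + b)) - (\<rho> + a*(\<rho>*a + b)) + (\<sigma>*a' + b')*(a - \<rho>*b) + d*(a - \<rho>*b)"
    by (simp add: d_def algebra_simps power2_eq_square)
  finally show "0 < \<sigma>*(1 + b*(\<rho>*a + b)) - (\<rho> + a*(\<rho>*a + b)) + (\<sigma>*a' + b')*(a - \<rho>*b)"
    by simp
next
  have "(\<sigma> - \<rho>)*(a - a') \<ge> 0" using above_\<sigma> above_\<rho> by (simp add: algebra_simps)
  then have slopes: "0 \<le> a - a'" using assms(2) by (simp add: zero_le_mult_iff)
  have intercepts: "0 \<le> b' - b" using above_\<rho> assms(1) slopes
    by (smt (verit) mult_nonneg_nonneg right_diff_distrib)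
  have "0 \<le> (a - a') + (b' - b)*\<rho> + (\<rho>*a + b)*(a*(b' - b) + b*(a - a'))"
    using slopes intercepts assms(1,3,4) by (intro add_nonneg_nonneg mult_nonneg_nonneg) auto
  also have "\<dots> = b'*(\<rho> + a*(\<rho>*a + b)) - a'*(1 + b*(\<rho>*a + b)) + (a - \<rho>*b)"
    by (simp add: algebra_simps)
  finally show "0 \<le> b'*(\<rho> + a*(\<rho>*a + b)) - a'*(1 + b*(\<rho>*a + b)) + (a - \<rho>*b)" .
qed

lemma tangent_cross_sign_greater:
  fixes \<rho> \<sigma> a b a' b' :: real
  assumes "0 < \<sigma>" "\<sigma> < \<rho>" "0 \<le> a" "0 \<le> b"
    and above_\<sigma>: "\<sigma>*a' + b' \<le> \<sigma>*a + b" and above_\<rho>: "\<rho>*a + b \<le> \<rho>*a' + b'"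
    and chord: "\<sigma>*(\<rho>*a + b) \<le> \<rho>*(\<sigma>*a' + b')"
  shows "\<sigma>*(1 + b*(\<rho>*a + b)) - (\<rho> + a*(\<rho>*a + b)) + (\<sigma>*a' + b')*(a - \<rho>*b) < 0"
    and "b'*(\<rho> + a*(\<rho>*a + b)) - a'*(1 + b*(\<rho>*a + b)) + (a - \<rho>*b) \<le> 0"
proof -
  define d where "d = \<sigma>*a + b - (\<sigma>*a' + b')"
  have d: "0 \<le> d" "\<rho>*d \<le> (\<rho> - \<sigma>)*b" using above_\<sigma> chord by (simp_all add: d_def algebra_simps)
  have "d*(\<rho>*b - a) \<le> (\<rho>*d)*b"
    using d assms(3) by (simp add: algebra_simps mult_left_mono)
  also have "\<dots> \<le> (\<rho> - \<sigma>)*b*b"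
    using d assms(4) by (simp add: mult_right_mono)
  also have "\<dots> < (1 + a\<^sup>2 + b\<^sup>2)*(\<rho> - \<sigma>)"
  proof -
    have "0 < (1 + a\<^sup>2)*(\<rho> - \<sigma>)" using assms(2) by (simp add: add_pos_nonneg)
    then show ?thesis by (simp add: power2_eq_square algebra_simps)
  qed
  also have "(1 + a\<^sup>2 + b\<^sup>2)*(\<rho> - \<sigma>)
      = d*(\<rho>*b - a) - (\<sigma>*(1 + b*(\<rho>*a + b)) - (\<rho> + a*(\<rho>*a + b)) + (\<sigma>*a' + b')*(a - \<rho>*b))"
    by (simp add: d_def algebra_simps power2_eq_square)
  finally show "\<sigma>*(1 + b*(\<rho>*a + b)) - (\<rho> + a*(\<rho>*a + b)) + (\<sigma>*a' + b')*(a - \<rho>*b) < 0"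
    by simp
next
  have "(\<rho> - \<sigma>)*(a' - a) \<ge> 0" using above_\<sigma> above_\<rho> by (simp add: algebra_simps)
  then have slopes: "0 \<le> a' - a" using assms(2) by (simp add: zero_le_mult_iff)
  have intercepts: "0 \<le> b - b'" using above_\<sigma> assms(1) slopes
    by (smt (verit) mult_nonneg_nonneg right_diff_distrib)
  have "b'*(\<rho> + a*(\<rho>*a + b)) - a'*(1 + b*(\<rho>*a + b)) + (a - \<rho>*b)
      = - ((a' - a) + (b - b')*\<rho> + (\<rho>*a + b)*(a*(b - b') + b*(a' - a)))"
    by (simp add: algebra_simps)
  also have "\<dots> \<le> 0"
    using slopes intercepts assms(1-4)
    by (simp only: neg_le_0_iff_le, intro add_nonneg_nonneg mult_nonneg_nonneg) auto
  finally show "b'*(\<rho> + a*(\<rho>*a + b)) - a'*(1 + b*(\<rho>*a + b)) + (a - \<rho>*b) \<le> 0" .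
qed

lemma inner_cross3_vector:
  "(vector [x, y, z] :: real^3) \<bullet> cross3 (vector [r, 1, c]) (vector [- a, - b, 1])
    = x*(1 + b*c) - y*(r + a*c) + z*(a - r*b)"
  by (simp add: cross3_def inner_vec_def sum_3 algebra_simps)

lemma cross_wvec_nvec_root_unique:
  assumes a: "admissible_theta \<theta>" and q: "0 < q" and \<tau>: "0 < \<tau>" and l: "0 \<le> l"
    and p: "p = \<tau> *\<^sub>R wvec \<theta> q + l *\<^sub>R nvec \<theta> q"
    and r: "0 < r" and root: "p \<bullet> cross3 (wvec \<theta> r) (nvec \<theta> r) = 0"
  shows "r = q"
proof (rule ccontr)
  assume "r \<noteq> q"
  define a b a' b' where "a = tangent_slope \<theta> r" and "b = tangent_intercept \<theta> r"
    and "a' = tangent_slope \<theta> q" and "b' = tangent_intercept \<theta> q"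
  have \<theta>r: "\<theta> r 1 = r*a + b" and \<theta>q: "\<theta> q 1 = q*a' + b'"
    by (simp_all add: a_def b_def a'_def b'_def tangent_intercept_def)
  define G1 where "G1 = q*(1 + b*(r*a + b)) - (r + a*(r*a + b)) + (q*a' + b')*(a - r*b)"
  define G2 where "G2 = b'*(r + a*(r*a + b)) - a'*(1 + b*(r*a + b)) + (a - r*b)"
  have "p \<bullet> cross3 (wvec \<theta> r) (nvec \<theta> r) = (1 / sqrt r) * ((\<tau> / sqrt q) * G1 + l * G2)"
    unfolding p wvec_eq[OF a q] wvec_eq[OF a r] nvec_eq[OF a q] nvec_eq[OF a r] \<theta>r \<theta>q
    by (simp add: a_def b_def a'_def b'_def cross_mult_left inner_add_left inner_cross3_vector
        G1_def G2_def algebra_simps)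
  then have combination: "(\<tau> / sqrt q) * G1 + l * G2 = 0"
    using root r by simp
  have ab: "0 \<le> a" "0 \<le> b"
    using tangent_slope_nonneg[OF a r] tangent_intercept_nonneg[OF a r]
    by (simp_all add: a_def b_def)
  have above: "q*a' + b' \<le> q*a + b" "r*a + b \<le> r*a' + b'"
    using theta_below_tangent[OF a r, of q] theta_below_tangent[OF a q, of r] q r \<theta>r \<theta>q
    by (simp_all add: a_def b_def a'_def b'_def algebra_simps)
  have scale: "0 < \<tau> / sqrt q" using \<tau> q by simp
  consider "r < q" | "q < r" using \<open>r \<noteq> q\<close> by linarith
  then show False
  proof cases
    case 1
    have mono: "r*a + b \<le> q*a' + b'"
      using admissible_theta_mono1[OF a, of r q 1] 1 r \<theta>r \<theta>q by simp
    have "0 < G1" "0 \<le> G2"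
      unfolding G1_def G2_def by (fact tangent_cross_sign_less[OF r 1 ab above mono])+
    then have "0 < (\<tau> / sqrt q) * G1 + l * G2"
      using scale l by (intro add_pos_nonneg mult_pos_pos mult_nonneg_nonneg)
    with combination show False by simp
  next
    case 2
    have chord: "q*(r*a + b) \<le> r*(q*a' + b')"
      using theta_ratio_antimono[OF a q 2] \<theta>r \<theta>q by simp
    have "G1 < 0" "G2 \<le> 0"
      unfolding G1_def G2_def by (fact tangent_cross_sign_greater[OF q 2 ab above chord])+
    then have "(\<tau> / sqrt q) * G1 + l * G2 < 0"
      using scale l by (intro add_neg_nonpos mult_pos_neg mult_nonneg_nonpos)
    with combination show False by simp
  qed
qed

lemma closed_Kset:
  assumes a: "admissible_theta \<theta>"
  shows "closed (Kset \<theta>)"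
proof -
  let ?f = "\<lambda>v::real^3. \<theta> (max (v$1) 0) (max (v$2) 0)"
  have "continuous_on UNIV (\<lambda>v::real^3. (\<lambda>(s, t). \<theta> s t) (max (v$1) 0, max (v$2) 0))"
    by (rule continuous_on_compose2[OF admissible_theta_continuous[OF a]])
       (auto intro!: continuous_intros)
  then have "continuous_on UNIV ?f" by simp
  moreover have "Kset \<theta> = {v. 0 \<le> v$1} \<inter> {v. 0 \<le> v$2} \<inter> {v. 0 \<le> v$3} \<inter> {v. v$3 \<le> ?f v}"
    unfolding Kset_def by (auto simp: max_absorb1)
  ultimately show ?thesis
    by (simp only:) (intro closed_Int closed_Collect_le continuous_intros)
qed

lemma graph_nearest_point_normal:
  fixes f :: "real \<Rightarrow> real"
  assumes deriv: "(f has_real_derivative D) (at x)" and "open S" "x \<in> S"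
    and nearest: "\<And>s. s \<in> S \<Longrightarrow> (a - x)\<^sup>2 + (c - f x)\<^sup>2 \<le> (a - s)\<^sup>2 + (c - f s)\<^sup>2"
  shows "a = x - (c - f x) * D"
proof -
  obtain e where "0 < e" "ball x e \<subseteq> S" using \<open>open S\<close> \<open>x \<in> S\<close> by (rule openE)
  then have "\<forall>s. \<bar>x - s\<bar> < e \<longrightarrow> (a - x)\<^sup>2 + (c - f x)\<^sup>2 \<le> (a - s)\<^sup>2 + (c - f s)\<^sup>2"
    using nearest by (auto simp: dist_real_def subset_iff)
  moreover have "((\<lambda>s. (a - s)\<^sup>2 + (c - f s)\<^sup>2) has_real_derivative
      2 * (a - x) * (- 1) + 2 * (c - f x) * (- D)) (at x)"
    by (rule derivative_eq_intros deriv refl | simp)+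
  ultimately have "2 * (a - x) * (- 1) + 2 * (c - f x) * (- D) = 0"
    using \<open>0 < e\<close> by (intro DERIV_local_min[where d=e]) auto
  then show ?thesis
    by (simp add: algebra_simps)
qed

lemma dist_vec3_power2:
  "(dist (p::real^3) v)\<^sup>2 = (p$1 - v$1)\<^sup>2 + (p$2 - v$2)\<^sup>2 + (p$3 - v$3)\<^sup>2"
  by (simp only: dist_norm power2_norm_eq_inner) (simp add: inner_vec_def sum_3 power2_eq_square)

lemma closest_point_Kset_normal:
  assumes a: "admissible_theta \<theta>" and pp: "pp = closest_point (Kset \<theta>) p"
    and x: "0 < pp$1" and y: "0 < pp$2" and z: "pp$3 = \<theta> (pp$1) (pp$2)"
  obtains l where "0 \<le> l"
    and "p = pp + l *\<^sub>R vector [- pd1 \<theta> (pp$1) (pp$2), - pd2 \<theta> (pp$1) (pp$2), 1]"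
proof -
  have nearest: "(p$1 - pp$1)\<^sup>2 + (p$2 - pp$2)\<^sup>2 + (p$3 - pp$3)\<^sup>2
      \<le> (p$1 - v$1)\<^sup>2 + (p$2 - v$2)\<^sup>2 + (p$3 - v$3)\<^sup>2" if "v \<in> Kset \<theta>" for v
  proof -
    have "dist p pp \<le> dist p v" using closest_point_le[OF closed_Kset[OF a] that] pp by simp
    then have "(dist p pp)\<^sup>2 \<le> (dist p v)\<^sup>2" by (intro power_mono) auto
    then show ?thesis by (simp only: dist_vec3_power2)
  qed
  define l where "l = p$3 - pp$3"
  have "p$1 = pp$1 - (p$3 - \<theta> (pp$1) (pp$2)) * pd1 \<theta> (pp$1) (pp$2)"
  proof (rule graph_nearest_point_normal[OF admissible_theta_has_pd1[OF a x y] open_greaterThan])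
    fix s :: real assume "s \<in> {0<..}"
    then have "vector [s, pp$2, \<theta> s (pp$2)] \<in> Kset \<theta>"
      unfolding Kset_def using y admissible_theta_nonneg[OF a, of s "pp$2"] by simp
    from nearest[OF this] show "(p$1 - pp$1)\<^sup>2 + (p$3 - \<theta> (pp$1) (pp$2))\<^sup>2
        \<le> (p$1 - s)\<^sup>2 + (p$3 - \<theta> s (pp$2))\<^sup>2"
      using z by simp
  qed (use x in simp)
  moreover have "p$2 = pp$2 - (p$3 - \<theta> (pp$1) (pp$2)) * pd2 \<theta> (pp$1) (pp$2)"
  proof (rule graph_nearest_point_normal[OF admissible_theta_has_pd2[OF a x y] open_greaterThan])
    fix t :: real assume "t \<in> {0<..}"
    then have "vector [pp$1, t, \<theta> (pp$1) t] \<in> Kset \<theta>"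
      unfolding Kset_def using x admissible_theta_nonneg[OF a, of "pp$1" t] by simp
    from nearest[OF this] show "(p$2 - pp$2)\<^sup>2 + (p$3 - \<theta> (pp$1) (pp$2))\<^sup>2
        \<le> (p$2 - t)\<^sup>2 + (p$3 - \<theta> (pp$1) t)\<^sup>2"
      using z by simp
  qed (use y in simp)
  moreover have "0 \<le> l"
  proof (rule ccontr)
    assume "\<not> 0 \<le> l"
    have "0 < pp$3" using z admissible_theta_pos[OF a x y] by simp
    \<comment> \<open>lowering the third coordinate to \<open>max 0 (p$3)\<close> stays in \<open>K\<close> and gets closer to \<open>p\<close>\<close>
    have "vector [pp$1, pp$2, max 0 (p$3)] \<in> Kset \<theta>"
      unfolding Kset_def using x y z \<open>\<not> 0 \<le> l\<close> admissible_theta_nonneg[OF a, of "pp$1" "pp$2"]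
      by (auto simp: l_def)
    from nearest[OF this] have "(p$3 - pp$3)\<^sup>2 \<le> (p$3 - max 0 (p$3))\<^sup>2" by simp
    moreover have "(p$3 - max 0 (p$3))\<^sup>2 < (p$3 - pp$3)\<^sup>2"
    proof (cases "0 \<le> p$3")
      case True
      then show ?thesis using \<open>\<not> 0 \<le> l\<close> by (simp add: l_def)
    next
      case False
      then have "(- p$3) * (- p$3) < (pp$3 - p$3) * (pp$3 - p$3)"
        using \<open>0 < pp$3\<close> by (intro mult_strict_mono) auto
      then show ?thesis using False by (simp add: power2_eq_square algebra_simps)
    qed
    ultimately show False by simp
  qed
  ultimately have "p = pp + l *\<^sub>R vector [- pd1 \<theta> (pp$1) (pp$2), - pd2 \<theta> (pp$1) (pp$2), 1]"
    using z by (simp add: l_def vec_eq_iff forall_3)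
  with \<open>0 \<le> l\<close> show ?thesis by (rule that)
qed

lemma graph_point_eq_scaled_wvec_iff:
  assumes a: "admissible_theta \<theta>" and x: "0 < v$1" and y: "0 < v$2" and z: "v$3 = \<theta> (v$1) (v$2)"
    and q: "0 < q" and \<tau>: "0 < \<tau>"
  shows "v = \<tau> *\<^sub>R wvec \<theta> q \<longleftrightarrow> q = v$1 / v$2 \<and> \<tau> = sqrt (v$1 * v$2)"
proof
  assume "v = \<tau> *\<^sub>R wvec \<theta> q"
  moreover have "\<tau> / sqrt q * q = \<tau> * sqrt q"
    using q by (metis real_div_sqrt less_imp_le times_divide_eq_right mult.commute)
  ultimately have "v$1 = \<tau> * sqrt q" "v$2 = \<tau> / sqrt q"
    unfolding wvec_eq[OF a q] by simp_all
  then show "q = v$1 / v$2 \<and> \<tau> = sqrt (v$1 * v$2)"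
    using q \<tau> by (simp add: real_sqrt_mult)
next
  assume qv: "q = v$1 / v$2 \<and> \<tau> = sqrt (v$1 * v$2)"
  then have "\<tau> / sqrt q = v$2"
    using x y by (simp add: real_sqrt_mult real_sqrt_divide)
  then show "v = \<tau> *\<^sub>R wvec \<theta> q"
    unfolding wvec_eq[OF a q] using x y z qv admissible_theta_eq_scaled[OF a x y]
    by (simp add: vec_eq_iff forall_3)
qed

theorem lemma4p5:
  fixes \<theta> :: "real \<Rightarrow> real \<Rightarrow> real" and p pp :: "real^3"
  assumes "admissible_theta \<theta>"
    and "pp = closest_point (Kset \<theta>) p"
    and "pp$1 > 0" and "pp$2 > 0"
    and "pp$3 = \<theta> (pp$1) (pp$2)"
  shows "(\<exists>!(q, \<tau>). q > 0 \<and> \<tau> > 0 \<and> pp = \<tau> *\<^sub>R wvec \<theta> q) \<and>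
         (\<forall>q \<tau>. q > 0 \<and> \<tau> > 0 \<and> pp = \<tau> *\<^sub>R wvec \<theta> q \<longrightarrow>
            p \<bullet> cross3 (wvec \<theta> q) (nvec \<theta> q) = 0 \<and>
            (\<forall>r>0. p \<bullet> cross3 (wvec \<theta> r) (nvec \<theta> r) = 0 \<longrightarrow> r = q) \<and>
            \<tau> = p \<bullet> ((1 / (norm (wvec \<theta> q))\<^sup>2) *\<^sub>R wvec \<theta> q))"
proof -
  note a = assms(1)
  define q where "q = pp$1 / pp$2"
  define \<tau> where "\<tau> = sqrt (pp$1 * pp$2)"
  have q: "0 < q" and \<tau>: "0 < \<tau>" using assms(3,4) by (simp_all add: q_def \<tau>_def)
  have rep: "pp = \<tau>' *\<^sub>R wvec \<theta> q' \<longleftrightarrow> q' = q \<and> \<tau>' = \<tau>" if "0 < q'" "0 < \<tau>'" for q' \<tau>'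
    using graph_point_eq_scaled_wvec_iff[OF a assms(3-5) that] by (simp add: q_def \<tau>_def)
  obtain l where l: "0 \<le> l" and p: "p = \<tau> *\<^sub>R wvec \<theta> q + l *\<^sub>R nvec \<theta> q"
  proof (rule closest_point_Kset_normal[OF assms])
    fix l
    assume "0 \<le> l" "p = pp + l *\<^sub>R vector [- pd1 \<theta> (pp$1) (pp$2), - pd2 \<theta> (pp$1) (pp$2), 1]"
    then show thesis
      using that[of l] rep[OF q \<tau>] nvec_eq_normal[OF a assms(3,4)] by (simp add: q_def)
  qed
  have root: "p \<bullet> cross3 (wvec \<theta> q) (nvec \<theta> q) = 0"
    unfolding p by (simp add: inner_add_left dot_cross_self)
  have "p \<bullet> wvec \<theta> q = \<tau> * (norm (wvec \<theta> q))\<^sup>2"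
    unfolding p using nvec_inner_wvec[OF a q]
    by (simp add: inner_add_left power2_norm_eq_inner)
  then have proj: "\<tau> = p \<bullet> ((1 / (norm (wvec \<theta> q))\<^sup>2) *\<^sub>R wvec \<theta> q)"
    using wvec_nonzero[OF q] by simp
  have "\<exists>!(q', \<tau>'). q' > 0 \<and> \<tau>' > 0 \<and> pp = \<tau>' *\<^sub>R wvec \<theta> q'"
    using rep q \<tau> by (auto intro!: ex1I[of _ "(q, \<tau>)"])
  then show ?thesis
    using rep root proj cross_wvec_nvec_root_unique[OF a q \<tau> l p] by auto
qed

end
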